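(* Let $(X,d_X)$ be an ultrametric space and $(Y,d_Y)$, $(Z,d_Z)$ be metric spaces. Let $f:X\to Y$ be a full function, let $L>0$, let $g:Y\to Z$ be Lipschitz with constant $L$ and $h:Z\to X$ be Lipschitz with constant $L$. Then $g\circ f$ is full, and if $d_Z$ is an ultrametric then $f\circ h$ is also full. The same holds with "full" replaced everywhere by "$\omega$-full".
   Context: For an ultrametric space $(W,d_W)$, a set $A\subseteq W$ is full with constant $r>0$ if $B(x,r)=\{y\in W:d_W(x,y)<r\}\subseteq A$ for every $x\in A$, and full if it is full with some constant. A function $f$ from an ultrametric space $W$ to a space $V$ is full if it takes finitely many values and the preimage of each value is a full set; it is $\omega$-full if it takes at most countably many values and there is a single $r>0$ such that the preimage of each value is full with constant $r$. A function $g:(Y,d_Y)\to(Z,d_Z)$ is Lipschitz with constant $L$ if $d_Z(g(y),g(y'))\le L\,d_Y(y,y')$ for all $y,y'$. *)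

theory Defs
  imports "HOL-Analysis.Analysis"
begin

definition ultrametric :: "'a set \<Rightarrow> ('a \<Rightarrow> 'a \<Rightarrow> real) \<Rightarrow> bool" where
  "ultrametric W d \<longleftrightarrow> Metric_space W d \<and>
     (\<forall>x\<in>W. \<forall>y\<in>W. \<forall>z\<in>W. d x z \<le> max (d x y) (d y z))"

definition full_set_with :: "'a set \<Rightarrow> ('a \<Rightarrow> 'a \<Rightarrow> real) \<Rightarrow> real \<Rightarrow> 'a set \<Rightarrow> bool" where
  "full_set_with W d r A \<longleftrightarrow> (\<forall>x\<in>A. {y\<in>W. d x y < r} \<subseteq> A)"

definition full_set :: "'a set \<Rightarrow> ('a \<Rightarrow> 'a \<Rightarrow> real) \<Rightarrow> 'a set \<Rightarrow> bool" where
  "full_set W d A \<longleftrightarrow> (\<exists>r>0. full_set_with W d r A)"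

definition full_fun :: "'a set \<Rightarrow> ('a \<Rightarrow> 'a \<Rightarrow> real) \<Rightarrow> ('a \<Rightarrow> 'b) \<Rightarrow> bool" where
  "full_fun W d f \<longleftrightarrow> finite (f ` W) \<and>
     (\<forall>v\<in>f ` W. full_set W d {x\<in>W. f x = v})"

definition omega_full_fun :: "'a set \<Rightarrow> ('a \<Rightarrow> 'a \<Rightarrow> real) \<Rightarrow> ('a \<Rightarrow> 'b) \<Rightarrow> bool" where
  "omega_full_fun W d f \<longleftrightarrow> countable (f ` W) \<and>
     (\<exists>r>0. \<forall>v\<in>f ` W. full_set_with W d r {x\<in>W. f x = v})"

definition lipschitz_with :: "'a set \<Rightarrow> ('a \<Rightarrow> 'a \<Rightarrow> real) \<Rightarrow> ('b \<Rightarrow> 'b \<Rightarrow> real) \<Rightarrow> real \<Rightarrow> ('a \<Rightarrow> 'b) \<Rightarrow> bool" where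
  "lipschitz_with Y dY dZ L g \<longleftrightarrow> (\<forall>y\<in>Y. \<forall>y'\<in>Y. dZ (g y) (g y') \<le> L * dY y y')"

end

theory Submission
  imports Defs
begin

text \<open>A set is full with constant r exactly when membership in it is constant on r-balls, and a
  function has all its fibres full with constant r exactly when the function itself is constant
  on r-balls. Constancy on r-balls survives post-composition with any map, and pre-composition
  with an L-Lipschitz map turns it into constancy on (r/L)-balls. Finiteness and countability
  of the range are preserved because the range of a composite is an image of, resp. contained
  in, the range of f.\<close>

definition constant_on_balls :: "'a set \<Rightarrow> ('a \<Rightarrow> 'a \<Rightarrow> real) \<Rightarrow> real \<Rightarrow> ('a \<Rightarrow> 'b) \<Rightarrow> bool" where
  "constant_on_balls W d r f \<longleftrightarrow> (\<forall>x\<in>W. \<forall>y\<in>W. d x y < r \<longrightarrow> f y = f x)"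

lemma full_set_with_antimono:
  "full_set_with W d r A \<Longrightarrow> r' \<le> r \<Longrightarrow> full_set_with W d r' A"
  unfolding full_set_with_def by fastforce

lemma full_set_iff_eventually:
  "full_set W d A \<longleftrightarrow> (\<forall>\<^sub>F r in at_right 0. full_set_with W d r A)"
  unfolding full_set_def eventually_at_right_field
  by (meson dense full_set_with_antimono less_imp_le)

lemma fibres_full_with_iff_constant_on_balls:
  "(\<forall>v\<in>f ` W. full_set_with W d r {x\<in>W. f x = v}) \<longleftrightarrow> constant_on_balls W d r f"
  unfolding full_set_with_def constant_on_balls_def by fastforce

lemma full_fun_iff_constant_on_balls:
  "full_fun W d f \<longleftrightarrow> finite (f ` W) \<and> (\<exists>r>0. constant_on_balls W d r f)"
proof
  assume full: "full_fun W d f"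
  then have fin: "finite (f ` W)"
    unfolding full_fun_def by blast
  \<comment> \<open>Phrasing fullness as a property of all small enough r lets finitely many
    fibres share one constant, without taking an explicit minimum.\<close>
  have "\<forall>v\<in>f ` W. \<forall>\<^sub>F r in at_right 0. full_set_with W d r {x\<in>W. f x = v}"
    using full unfolding full_fun_def full_set_iff_eventually by blast
  then have "\<forall>\<^sub>F r in at_right 0. \<forall>v\<in>f ` W. full_set_with W d r {x\<in>W. f x = v}"
    by (simp only: eventually_ball_finite_distrib[OF fin])
  then have "\<forall>\<^sub>F r in at_right (0::real). r > 0 \<and> constant_on_balls W d r f"
    by (intro eventually_conj eventually_at_right_less)
      (simp only: fibres_full_with_iff_constant_on_balls)
  then have "\<exists>r>0. constant_on_balls W d r f"
    using eventually_happens' trivial_limit_at_right_real by blast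
  with fin show "finite (f ` W) \<and> (\<exists>r>0. constant_on_balls W d r f)" ..
next
  assume "finite (f ` W) \<and> (\<exists>r>0. constant_on_balls W d r f)"
  then show "full_fun W d f"
    unfolding full_fun_def full_set_def
    by (metis fibres_full_with_iff_constant_on_balls)
qed

lemma omega_full_fun_iff_constant_on_balls:
  "omega_full_fun W d f \<longleftrightarrow> countable (f ` W) \<and> (\<exists>r>0. constant_on_balls W d r f)"
  unfolding omega_full_fun_def fibres_full_with_iff_constant_on_balls ..

lemma constant_on_balls_comp_left:
  "constant_on_balls W d r f \<Longrightarrow> constant_on_balls W d r (g \<circ> f)"
  unfolding constant_on_balls_def by simp

lemma constant_on_balls_comp_lipschitz:
  assumes "constant_on_balls X dX r f" "h ` Z \<subseteq> X" "lipschitz_with Z dZ dX L h" "L > 0"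
  shows "constant_on_balls Z dZ (r / L) (f \<circ> h)"
  unfolding constant_on_balls_def
proof (intro ballI impI)
  fix z z' assume z: "z \<in> Z" "z' \<in> Z" and close: "dZ z z' < r / L"
  have "dX (h z) (h z') \<le> L * dZ z z'"
    using assms(3) z unfolding lipschitz_with_def by blast
  also have "\<dots> < r"
    using close assms(4) by (simp add: pos_less_divide_eq mult.commute)
  finally show "(f \<circ> h) z' = (f \<circ> h) z"
    using assms(1,2) z unfolding constant_on_balls_def by auto
qed

lemma range_comp_left_finite: "finite (f ` W) \<Longrightarrow> finite ((g \<circ> f) ` W)"
  by (metis finite_imageI image_comp)

lemma range_comp_left_countable: "countable (f ` W) \<Longrightarrow> countable ((g \<circ> f) ` W)"
  by (metis countable_image image_comp)

lemma range_comp_right_subset: "h ` Z \<subseteq> X \<Longrightarrow> (f \<circ> h) ` Z \<subseteq> f ` X"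
  by auto

lemma full_fun_comp_left: "full_fun W d f \<Longrightarrow> full_fun W d (g \<circ> f)"
  by (meson full_fun_iff_constant_on_balls constant_on_balls_comp_left range_comp_left_finite)

lemma omega_full_fun_comp_left: "omega_full_fun W d f \<Longrightarrow> omega_full_fun W d (g \<circ> f)"
  by (meson omega_full_fun_iff_constant_on_balls constant_on_balls_comp_left
      range_comp_left_countable)

lemma full_fun_comp_lipschitz:
  assumes "full_fun X dX f" "h ` Z \<subseteq> X" "lipschitz_with Z dZ dX L h" "L > 0"
  shows "full_fun Z dZ (f \<circ> h)"
proof -
  obtain r where "r > 0" "constant_on_balls X dX r f" "finite (f ` X)"
    using assms(1) full_fun_iff_constant_on_balls by blast
  then show ?thesis
    using assms(2-4) constant_on_balls_comp_lipschitz range_comp_right_subset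
    by (metis divide_pos_pos finite_subset full_fun_iff_constant_on_balls)
qed

lemma omega_full_fun_comp_lipschitz:
  assumes "omega_full_fun X dX f" "h ` Z \<subseteq> X" "lipschitz_with Z dZ dX L h" "L > 0"
  shows "omega_full_fun Z dZ (f \<circ> h)"
proof -
  obtain r where "r > 0" "constant_on_balls X dX r f" "countable (f ` X)"
    using assms(1) omega_full_fun_iff_constant_on_balls by blast
  then show ?thesis
    using assms(2-4) constant_on_balls_comp_lipschitz range_comp_right_subset
    by (metis divide_pos_pos countable_subset omega_full_fun_iff_constant_on_balls)
qed

theorem mainTheorem9:
  fixes X :: "'x set" and dX :: "'x \<Rightarrow> 'x \<Rightarrow> real"
    and Y :: "'y set" and dY :: "'y \<Rightarrow> 'y \<Rightarrow> real"
    and Z :: "'z set" and dZ :: "'z \<Rightarrow> 'z \<Rightarrow> real"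
    and f :: "'x \<Rightarrow> 'y" and g :: "'y \<Rightarrow> 'z" and h :: "'z \<Rightarrow> 'x" and L :: real
  assumes "ultrametric X dX"
    and "Metric_space Y dY"
    and "Metric_space Z dZ"
    and "f ` X \<subseteq> Y" and "g ` Y \<subseteq> Z" and "h ` Z \<subseteq> X"
    and "L > 0"
    and "lipschitz_with Y dY dZ L g"
    and "lipschitz_with Z dZ dX L h"
  shows "(full_fun X dX f \<longrightarrow>
            full_fun X dX (g \<circ> f) \<and> (ultrametric Z dZ \<longrightarrow> full_fun Z dZ (f \<circ> h)))
       \<and> (omega_full_fun X dX f \<longrightarrow>
            omega_full_fun X dX (g \<circ> f) \<and> (ultrametric Z dZ \<longrightarrow> omega_full_fun Z dZ (f \<circ> h)))"
  using full_fun_comp_left full_fun_comp_lipschitz[OF _ assms(6,9,7)]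
    omega_full_fun_comp_left omega_full_fun_comp_lipschitz[OF _ assms(6,9,7)]
  by blast

end
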